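(* Let $S$ be an $L$-theory extending $I\Sigma_1$ such that for some $K_0\in\mathbb{N}$, $S$ proves that pairwise coprime $a,b,c$ with $a+b=c$ satisfy $c<K_0\,\mathrm{rad}(abc)^{1+1/3}$, and $S$ proves Catalan's conjecture for the definable exponential $x^y$. Let $\langle\mathcal{B},e\rangle\models S+\mathrm{Exp}'$, with $\mathcal{A}$ a substructure of $\mathcal{B}$ satisfying $\mathrm{Pr}$ and $e:B\times A\to B$. Let $x\in B$, $y\in A$ with $x,y>1$. (a) If $y$ is standard, then $\mathrm{rad}(e(x,y))^2\le e(x,y)$. (b) If $y$ is nonstandard, then $K\,\mathrm{rad}(e(x,y))^n<e(x,y)$ for all standard $K,n\in\mathbb{N}$.
   Context: $L=\langle0,1,+,\cdot,\le\rangle$; $\mathrm{rad}(a)$ is the product of the distinct primes dividing $a$. Catalan's conjecture for $x^y$: the only $x,y,a,b>1$ with $x^a-y^b=1$ are $x=3,a=2,y=2,b=3$. Presburger arithmetic $\mathrm{Pr}$: $0\ne z+1$; $x\ne0\to\exists z\,(x=z+1)$; $x+z=y+z\to x=y$; $x+0=x$; associativity and commutativity of $+$; $x\le y\leftrightarrow\exists z\,(x+z=y)$; for each standard $0<n$, $\exists y\,(ny\le x<n(y+1))$. $\mathrm{Exp}'$: (e0) there is an $L$-substructure $\mathcal{A}$ of $\mathcal{B}$ satisfying $\mathrm{Pr}$ with $e:B\times A\to B$; and for $x\in B$, $y,z\in A$: (e1) $(x=1\vee y=0)\leftrightarrow e(x,y)=1$; (e2) $x\ne0\to e(x,y)\neq0$;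 (e3) $e(x,1)=x$; (e4) $e(x,y+z)=e(x,y)e(x,z)$. *)

theory Defs
  imports Main
begin

text \<open>The universe of the structure B is the whole HOL type 'a.\<close>

record 'a Lstr =
  zr :: 'a
  on :: 'a
  ad :: "'a \<Rightarrow> 'a \<Rightarrow> 'a"
  mu :: "'a \<Rightarrow> 'a \<Rightarrow> 'a"
  lq :: "'a \<Rightarrow> 'a \<Rightarrow> bool"

datatype tm = Var nat | Zero | One | Plus tm tm | Times tm tm

text \<open>BEx t f / BAll t f are bounded quantifiers (exists/forall x <= t); the bound
  t is evaluated in the outer environment, so the bound variable never occurs in t.\<close>
datatype fm = Eq tm tm | Le tm tm | Neg fm | Conj fm fm | Disj fm fm
  | Ex fm | All fm | BEx tm fm | BAll tm fm

primrec evt :: "'a Lstr \<Rightarrow> (nat \<Rightarrow> 'a) \<Rightarrow> tm \<Rightarrow> 'a" where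
  "evt M v (Var i) = v i"
| "evt M v Zero = zr M"
| "evt M v One = on M"
| "evt M v (Plus s t) = ad M (evt M v s) (evt M v t)"
| "evt M v (Times s t) = mu M (evt M v s) (evt M v t)"

primrec sat :: "'a Lstr \<Rightarrow> (nat \<Rightarrow> 'a) \<Rightarrow> fm \<Rightarrow> bool" where
  "sat M v (Eq s t) = (evt M v s = evt M v t)"
| "sat M v (Le s t) = lq M (evt M v s) (evt M v t)"
| "sat M v (Neg f) = (\<not> sat M v f)"
| "sat M v (Conj f g) = (sat M v f \<and> sat M v g)"
| "sat M v (Disj f g) = (sat M v f \<or> sat M v g)"
| "sat M v (Ex f) = (\<exists>x. sat M (case_nat x v) f)"
| "sat M v (All f) = (\<forall>x. sat M (case_nat x v) f)"
| "sat M v (BEx t f) = (\<exists>x. lq M x (evt M v t) \<and> sat M (case_nat x v) f)"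
| "sat M v (BAll t f) = (\<forall>x. lq M x (evt M v t) \<longrightarrow> sat M (case_nat x v) f)"

primrec delta0 :: "fm \<Rightarrow> bool" where
  "delta0 (Eq s t) = True"
| "delta0 (Le s t) = True"
| "delta0 (Neg f) = delta0 f"
| "delta0 (Conj f g) = (delta0 f \<and> delta0 g)"
| "delta0 (Disj f g) = (delta0 f \<and> delta0 g)"
| "delta0 (Ex f) = False"
| "delta0 (All f) = False"
| "delta0 (BEx t f) = delta0 f"
| "delta0 (BAll t f) = delta0 f"

fun sigma1 :: "fm \<Rightarrow> bool" where
  "sigma1 (Ex f) = sigma1 f"
| "sigma1 f = delta0 f"

definition Q_ax :: "'a Lstr \<Rightarrow> bool" where
  "Q_ax M \<longleftrightarrow>
     (\<forall>x. ad M x (on M) \<noteq> zr M) \<and>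
     (\<forall>x y. ad M x (on M) = ad M y (on M) \<longrightarrow> x = y) \<and>
     (\<forall>x. x \<noteq> zr M \<longrightarrow> (\<exists>y. x = ad M y (on M))) \<and>
     (\<forall>x. ad M x (zr M) = x) \<and>
     (\<forall>x y. ad M x (ad M y (on M)) = ad M (ad M x y) (on M)) \<and>
     (\<forall>x. mu M x (zr M) = zr M) \<and>
     (\<forall>x y. mu M x (ad M y (on M)) = ad M (mu M x y) x) \<and>
     (\<forall>x y. lq M x y \<longleftrightarrow> (\<exists>z. ad M z x = y))"

definition ISigma1 :: "'a Lstr \<Rightarrow> bool" where
  "ISigma1 M \<longleftrightarrow> Q_ax M \<and>
     (\<forall>f. sigma1 f \<longrightarrow> (\<forall>v.
        (sat M (case_nat (zr M) v) f \<and>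
         (\<forall>x. sat M (case_nat x v) f \<longrightarrow> sat M (case_nat (ad M x (on M)) v) f))
        \<longrightarrow> (\<forall>x. sat M (case_nat x v) f)))"

primrec num :: "'a Lstr \<Rightarrow> nat \<Rightarrow> 'a" where
  "num M 0 = zr M"
| "num M (Suc n) = ad M (num M n) (on M)"

primrec pw :: "'a Lstr \<Rightarrow> 'a \<Rightarrow> nat \<Rightarrow> 'a" where
  "pw M r 0 = on M"
| "pw M r (Suc n) = mu M (pw M r n) r"

text \<open>n y as an abbreviation y + ... + y (n summands), as in Presburger arithmetic\<close>
primrec nsum :: "'a Lstr \<Rightarrow> nat \<Rightarrow> 'a \<Rightarrow> 'a" where
  "nsum M 0 y = zr M"
| "nsum M (Suc n) y = ad M (nsum M n y) y"

definition lt :: "'a Lstr \<Rightarrow> 'a \<Rightarrow> 'a \<Rightarrow> bool" where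
  "lt M x y \<longleftrightarrow> lq M x y \<and> x \<noteq> y"

definition dvdB :: "'a Lstr \<Rightarrow> 'a \<Rightarrow> 'a \<Rightarrow> bool" where
  "dvdB M d a \<longleftrightarrow> (\<exists>k. a = mu M d k)"

definition coprimeB :: "'a Lstr \<Rightarrow> 'a \<Rightarrow> 'a \<Rightarrow> bool" where
  "coprimeB M a b \<longleftrightarrow> (\<forall>d. dvdB M d a \<and> dvdB M d b \<longrightarrow> d = on M)"

definition sqfreeB :: "'a Lstr \<Rightarrow> 'a \<Rightarrow> bool" where
  "sqfreeB M r \<longleftrightarrow> (\<forall>d. dvdB M (mu M d d) r \<longrightarrow> d = on M)"

text \<open>rad(a) = r : r is the largest squarefree divisor of a (for a >= 1 this is the
  product of the distinct primes dividing a); a first-order definition.\<close>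
definition is_rad :: "'a Lstr \<Rightarrow> 'a \<Rightarrow> 'a \<Rightarrow> bool" where
  "is_rad M a r \<longleftrightarrow> dvdB M r a \<and> sqfreeB M r \<and>
     (\<forall>s. dvdB M s a \<and> sqfreeB M s \<longrightarrow> lq M s r)"

text \<open>Goedel's beta function: beta(c,d,i) = c mod (1 + (i+1) d)\<close>
definition betaB :: "'a Lstr \<Rightarrow> 'a \<Rightarrow> 'a \<Rightarrow> 'a \<Rightarrow> 'a \<Rightarrow> bool" where
  "betaB M c d i r \<longleftrightarrow>
     (let m = ad M (on M) (mu M (ad M i (on M)) d) in
       (\<exists>q. c = ad M (mu M q m) r) \<and> lt M r m)"

definition is_exp :: "'a Lstr \<Rightarrow> 'a \<Rightarrow> 'a \<Rightarrow> 'a \<Rightarrow> bool" where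
  "is_exp M x a z \<longleftrightarrow> (\<exists>c d.
     betaB M c d (zr M) (on M) \<and>
     (\<forall>i. lt M i a \<longrightarrow> (\<exists>u. betaB M c d i u \<and> betaB M c d (ad M i (on M)) (mu M u x))) \<and>
     betaB M c d a z)"

text \<open>abc with exponent 1+1/3: c < K0 rad(abc)^(4/3), i.e. c^3 < K0^3 rad(abc)^4\<close>
definition abcB :: "'a Lstr \<Rightarrow> nat \<Rightarrow> bool" where
  "abcB M K0 \<longleftrightarrow> (\<forall>a b c r.
     a \<noteq> zr M \<and> b \<noteq> zr M \<and> c \<noteq> zr M \<and>
     coprimeB M a b \<and> coprimeB M a c \<and> coprimeB M b c \<and> ad M a b = c \<and>
     is_rad M (mu M (mu M a b) c) r
     \<longrightarrow> lt M (pw M c 3) (mu M (pw M (num M K0) 3) (pw M r 4)))"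

definition catalanB :: "'a Lstr \<Rightarrow> bool" where
  "catalanB M \<longleftrightarrow> (\<forall>x y a b u w.
     lt M (on M) x \<and> lt M (on M) y \<and> lt M (on M) a \<and> lt M (on M) b \<and>
     is_exp M x a u \<and> is_exp M y b w \<and> u = ad M w (on M)
     \<longrightarrow> x = num M 3 \<and> a = num M 2 \<and> y = num M 2 \<and> b = num M 3)"

definition substr :: "'a Lstr \<Rightarrow> 'a set \<Rightarrow> bool" where
  "substr M A \<longleftrightarrow> zr M \<in> A \<and> on M \<in> A \<and>
     (\<forall>x\<in>A. \<forall>y\<in>A. ad M x y \<in> A \<and> mu M x y \<in> A)"

definition Pr_on :: "'a Lstr \<Rightarrow> 'a set \<Rightarrow> bool" where
  "Pr_on M A \<longleftrightarrow>
     (\<forall>z\<in>A. zr M \<noteq> ad M z (on M)) \<and>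
     (\<forall>x\<in>A. x \<noteq> zr M \<longrightarrow> (\<exists>z\<in>A. x = ad M z (on M))) \<and>
     (\<forall>x\<in>A. \<forall>y\<in>A. \<forall>z\<in>A. ad M x z = ad M y z \<longrightarrow> x = y) \<and>
     (\<forall>x\<in>A. ad M x (zr M) = x) \<and>
     (\<forall>x\<in>A. \<forall>y\<in>A. \<forall>z\<in>A. ad M (ad M x y) z = ad M x (ad M y z)) \<and>
     (\<forall>x\<in>A. \<forall>y\<in>A. ad M x y = ad M y x) \<and>
     (\<forall>x\<in>A. \<forall>y\<in>A. lq M x y \<longleftrightarrow> (\<exists>z\<in>A. ad M x z = y)) \<and>
     (\<forall>n::nat. 0 < n \<longrightarrow> (\<forall>x\<in>A. \<exists>y\<in>A.
        lq M (nsum M n y) x \<and> lt M x (nsum M n (ad M y (on M)))))"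

definition ExpP :: "'a Lstr \<Rightarrow> 'a set \<Rightarrow> ('a \<Rightarrow> 'a \<Rightarrow> 'a) \<Rightarrow> bool" where
  "ExpP M A e \<longleftrightarrow> substr M A \<and> Pr_on M A \<and>
     (\<forall>x. \<forall>y\<in>A. (x = on M \<or> y = zr M) \<longleftrightarrow> e x y = on M) \<and>
     (\<forall>x. \<forall>y\<in>A. x \<noteq> zr M \<longrightarrow> e x y \<noteq> zr M) \<and>
     (\<forall>x. e x (on M) = x) \<and>
     (\<forall>x. \<forall>y\<in>A. \<forall>z\<in>A. e x (ad M y z) = mu M (e x y) (e x z))"

definition standard :: "'a Lstr \<Rightarrow> 'a \<Rightarrow> bool" where
  "standard M y \<longleftrightarrow> (\<exists>n. y = num M n)"

end

theory Submission
  imports Defs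
begin

text \<open>
  In a model of I\<Sigma>_1, induction yields the laws of a discretely ordered semidomain,
  division with remainder, and the least number principle for the bounded formulas that
  describe gcd-cofactors and radicals. Hence a squarefree divisor of a power w^(k+1)
  divides w, so the radical of any divisor of w^(k+1) is at most w.

  (a) For standard y = n \<ge> 2 we have e(x,y) = x^n, hence rad(x^n)^2 \<le> x^2 \<le> x^n.

  (b) For nonstandard y, division in Presburger arithmetic gives y = (n+1)q + i with
  i \<le> n and q nonstandard, so q \<ge> K + n and X = e(x,q) \<ge> x^(K+n) > K x^n. Now
  e(x,y) = X^(n+1) x^i divides (X x)^(n+1), so rad(e(x,y)) \<le> X x and
  K rad(e(x,y))^n \<le> (K x^n) X^n < X^(n+1) \<le> e(x,y).
\<close>

section \<open>Models of I\<Sigma>_1 as ordered semidomains\<close>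

locale isigma1_model =
  fixes M :: "'a Lstr"
  assumes ISigma1: "ISigma1 M"
begin

abbreviation Zr where "Zr \<equiv> zr M"
abbreviation On where "On \<equiv> on M"
abbreviation addM (infixl "\<oplus>" 65) where "x \<oplus> y \<equiv> ad M x y"
abbreviation multM (infixl "\<otimes>" 70) where "x \<otimes> y \<equiv> mu M x y"
abbreviation leM (infix "\<preceq>" 50) where "x \<preceq> y \<equiv> lq M x y"
abbreviation ltM (infix "\<prec>" 50) where "x \<prec> y \<equiv> lt M x y"

lemma Q_succ_neq_zero: "x \<oplus> On \<noteq> Zr"
  and Q_succ_inject: "x \<oplus> On = y \<oplus> On \<Longrightarrow> x = y"
  and Q_zero_or_succ: "x \<noteq> Zr \<Longrightarrow> \<exists>y. x = y \<oplus> On"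
  and Q_add_zero: "x \<oplus> Zr = x"
  and Q_add_succ: "x \<oplus> (y \<oplus> On) = (x \<oplus> y) \<oplus> On"
  and Q_mult_zero: "x \<otimes> Zr = Zr"
  and Q_mult_succ: "x \<otimes> (y \<oplus> On) = x \<otimes> y \<oplus> x"
  and Q_le_iff: "x \<preceq> y \<longleftrightarrow> (\<exists>z. z \<oplus> x = y)"
  using ISigma1 unfolding ISigma1_def Q_ax_def by blast+

text \<open>In the formulas below, \<open>Var 0\<close> is the induction variable and \<open>Var (i + 1)\<close>
  stands for the parameter \<open>v i\<close>.\<close>

lemma sigma1_induct:
  assumes "sigma1 f" and "\<And>x. sat M (case_nat x v) f \<longleftrightarrow> P x"
    and "P Zr" and "\<And>x. P x \<Longrightarrow> P (x \<oplus> On)"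
  shows "P x"
proof -
  have "sat M (case_nat Zr v) f \<and>
        (\<forall>x. sat M (case_nat x v) f \<longrightarrow> sat M (case_nat (x \<oplus> On) v) f)
        \<longrightarrow> (\<forall>x. sat M (case_nat x v) f)"
    using ISigma1 assms(1) unfolding ISigma1_def by blast
  then show ?thesis
    using assms(2-4) by auto
qed

lemma zero_add: "Zr \<oplus> x = x"
proof (rule sigma1_induct[where f = "Eq (Plus Zero (Var 0)) (Var 0)" and v = undefined
      and P = "\<lambda>x. Zr \<oplus> x = x"])
  fix x
  assume IH: "Zr \<oplus> x = x"
  show "Zr \<oplus> (x \<oplus> On) = x \<oplus> On"
    unfolding Q_add_succ IH ..
qed (simp_all add: Q_add_zero)

lemma add_assoc: "(x \<oplus> y) \<oplus> z = x \<oplus> (y \<oplus> z)"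
proof (rule sigma1_induct[where f = "Eq (Plus (Plus (Var 1) (Var 2)) (Var 0)) (Plus (Var 1) (Plus (Var 2) (Var 0)))"
      and v = "\<lambda>i. if i = 0 then x else y" and P = "\<lambda>z. (x \<oplus> y) \<oplus> z = x \<oplus> (y \<oplus> z)"])
  fix z
  assume IH: "(x \<oplus> y) \<oplus> z = x \<oplus> (y \<oplus> z)"
  show "(x \<oplus> y) \<oplus> (z \<oplus> On) = x \<oplus> (y \<oplus> (z \<oplus> On))"
    unfolding Q_add_succ IH ..
qed (simp_all add: Q_add_zero)

lemma one_add: "On \<oplus> x = x \<oplus> On"
proof (rule sigma1_induct[where f = "Eq (Plus One (Var 0)) (Plus (Var 0) One)" and v = undefined
      and P = "\<lambda>x. On \<oplus> x = x \<oplus> On"])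
  fix x
  assume IH: "On \<oplus> x = x \<oplus> On"
  show "On \<oplus> (x \<oplus> On) = x \<oplus> On \<oplus> On"
    unfolding Q_add_succ IH ..
qed (simp_all add: Q_add_zero zero_add)

lemma add_commute: "x \<oplus> y = y \<oplus> x"
proof (rule sigma1_induct[where f = "Eq (Plus (Var 1) (Var 0)) (Plus (Var 0) (Var 1))"
      and v = "\<lambda>_. x" and P = "\<lambda>y. x \<oplus> y = y \<oplus> x"])
  fix y
  assume IH: "x \<oplus> y = y \<oplus> x"
  have "x \<oplus> (y \<oplus> On) = (y \<oplus> x) \<oplus> On"
    unfolding Q_add_succ IH ..
  also have "\<dots> = y \<oplus> (On \<oplus> x)"
    unfolding one_add by (rule add_assoc)
  also have "\<dots> = (y \<oplus> On) \<oplus> x"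
    by (rule add_assoc[symmetric])
  finally show "x \<oplus> (y \<oplus> On) = (y \<oplus> On) \<oplus> x" .
qed (simp_all add: Q_add_zero zero_add)

lemma add_left_commute: "x \<oplus> (y \<oplus> z) = y \<oplus> (x \<oplus> z)"
  by (metis add_assoc add_commute)

lemma add_right_cancel: "x \<oplus> z = y \<oplus> z \<Longrightarrow> x = y"
proof -
  have "x \<oplus> z = y \<oplus> z \<longrightarrow> x = y"
  proof (rule sigma1_induct[where f = "Disj (Neg (Eq (Plus (Var 1) (Var 0)) (Plus (Var 2) (Var 0)))) (Eq (Var 1) (Var 2))"
        and v = "\<lambda>i. if i = 0 then x else y" and P = "\<lambda>z. x \<oplus> z = y \<oplus> z \<longrightarrow> x = y"])
    fix z
    assume "x \<oplus> z = y \<oplus> z \<longrightarrow> x = y"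
    then show "x \<oplus> (z \<oplus> On) = y \<oplus> (z \<oplus> On) \<longrightarrow> x = y"
      using Q_succ_inject[of "x \<oplus> z" "y \<oplus> z"] unfolding Q_add_succ by blast
  qed (simp_all add: Q_add_zero)
  then show "x \<oplus> z = y \<oplus> z \<Longrightarrow> x = y" by blast
qed

lemma distrib_left: "x \<otimes> (y \<oplus> z) = x \<otimes> y \<oplus> x \<otimes> z"
proof (rule sigma1_induct[where f = "Eq (Times (Var 1) (Plus (Var 2) (Var 0))) (Plus (Times (Var 1) (Var 2)) (Times (Var 1) (Var 0)))"
      and v = "\<lambda>i. if i = 0 then x else y" and P = "\<lambda>z. x \<otimes> (y \<oplus> z) = x \<otimes> y \<oplus> x \<otimes> z"])
  fix z
  assume IH: "x \<otimes> (y \<oplus> z) = x \<otimes> y \<oplus> x \<otimes> z"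
  show "x \<otimes> (y \<oplus> (z \<oplus> On)) = x \<otimes> y \<oplus> x \<otimes> (z \<oplus> On)"
    unfolding Q_add_succ Q_mult_succ IH by (rule add_assoc)
qed (simp_all add: Q_add_zero Q_mult_zero)

lemma zero_mult: "Zr \<otimes> x = Zr"
proof (rule sigma1_induct[where f = "Eq (Times Zero (Var 0)) Zero" and v = undefined
      and P = "\<lambda>x. Zr \<otimes> x = Zr"])
  fix x
  assume IH: "Zr \<otimes> x = Zr"
  show "Zr \<otimes> (x \<oplus> On) = Zr"
    unfolding Q_mult_succ IH Q_add_zero ..
qed (simp_all add: Q_mult_zero)

lemma succ_mult: "(x \<oplus> On) \<otimes> y = x \<otimes> y \<oplus> y"
proof (rule sigma1_induct[where f = "Eq (Times (Plus (Var 1) One) (Var 0)) (Plus (Times (Var 1) (Var 0)) (Var 0))"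
      and v = "\<lambda>_. x" and P = "\<lambda>y. (x \<oplus> On) \<otimes> y = x \<otimes> y \<oplus> y"])
  fix y
  assume IH: "(x \<oplus> On) \<otimes> y = x \<otimes> y \<oplus> y"
  show "(x \<oplus> On) \<otimes> (y \<oplus> On) = x \<otimes> (y \<oplus> On) \<oplus> (y \<oplus> On)"
    unfolding Q_mult_succ IH by (simp only: add_assoc add_commute add_left_commute)
qed (simp_all add: Q_add_zero Q_mult_zero)

lemma mult_commute: "x \<otimes> y = y \<otimes> x"
proof (rule sigma1_induct[where f = "Eq (Times (Var 1) (Var 0)) (Times (Var 0) (Var 1))"
      and v = "\<lambda>_. x" and P = "\<lambda>y. x \<otimes> y = y \<otimes> x"])
  fix y
  assume IH: "x \<otimes> y = y \<otimes> x"
  show "x \<otimes> (y \<oplus> On) = (y \<oplus> On) \<otimes> x"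
    unfolding Q_mult_succ succ_mult IH ..
qed (simp_all add: Q_mult_zero zero_mult)

lemma mult_one: "x \<otimes> On = x"
  using Q_mult_succ[of x Zr] by (simp add: Q_mult_zero zero_add)

lemma mult_assoc: "(x \<otimes> y) \<otimes> z = x \<otimes> (y \<otimes> z)"
proof (rule sigma1_induct[where f = "Eq (Times (Times (Var 1) (Var 2)) (Var 0)) (Times (Var 1) (Times (Var 2) (Var 0)))"
      and v = "\<lambda>i. if i = 0 then x else y" and P = "\<lambda>z. (x \<otimes> y) \<otimes> z = x \<otimes> (y \<otimes> z)"])
  fix z
  assume IH: "(x \<otimes> y) \<otimes> z = x \<otimes> (y \<otimes> z)"
  show "(x \<otimes> y) \<otimes> (z \<oplus> On) = x \<otimes> (y \<otimes> (z \<oplus> On))"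
    unfolding Q_mult_succ IH distrib_left mult_one ..
qed (simp_all add: Q_mult_zero)

lemma one_mult: "On \<otimes> x = x"
  by (simp add: mult_one mult_commute)

lemma zero_neq_one: "Zr \<noteq> On"
  using Q_succ_neq_zero[of Zr] by (simp add: zero_add)

lemma lq_iff_add: "x \<preceq> y \<longleftrightarrow> (\<exists>z. y = x \<oplus> z)"
  unfolding Q_le_iff by (metis add_commute)

lemma add_eq_zero_right: "x \<oplus> y = Zr \<Longrightarrow> y = Zr"
  by (metis Q_zero_or_succ Q_add_succ Q_succ_neq_zero)

lemma add_eq_self: "x \<oplus> y = x \<Longrightarrow> y = Zr"
  by (metis add_right_cancel add_commute Q_add_zero)

lemma zero_lq: "Zr \<preceq> x"
  unfolding lq_iff_add using zero_add by metis

lemma lq_refl: "x \<preceq> x"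
  unfolding lq_iff_add using Q_add_zero by metis

lemma lq_trans: "x \<preceq> y \<Longrightarrow> y \<preceq> z \<Longrightarrow> x \<preceq> z"
  unfolding lq_iff_add by (metis add_assoc)

lemma lq_antisym: "x \<preceq> y \<Longrightarrow> y \<preceq> x \<Longrightarrow> x = y"
  unfolding lq_iff_add by (metis add_assoc add_eq_self add_eq_zero_right Q_add_zero)

lemma lq_total: "x \<preceq> y \<or> y \<preceq> x"
proof (rule sigma1_induct[where f = "Disj (Le (Var 0) (Var 1)) (Le (Var 1) (Var 0))"
      and v = "\<lambda>_. y" and P = "\<lambda>x. x \<preceq> y \<or> y \<preceq> x"])
  fix x
  assume IH: "x \<preceq> y \<or> y \<preceq> x"
  show "x \<oplus> On \<preceq> y \<or> y \<preceq> x \<oplus> On"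
  proof (cases "y \<preceq> x")
    case True
    then show ?thesis
      using lq_trans lq_iff_add by blast
  next
    case False
    with IH obtain z where z: "y = x \<oplus> z" and "z \<noteq> Zr"
      unfolding lq_iff_add by (metis Q_add_zero lq_refl)
    then obtain w where "z = w \<oplus> On"
      using Q_zero_or_succ by blast
    with z have "y = (x \<oplus> On) \<oplus> w"
      by (metis add_assoc add_commute)
    then show ?thesis
      unfolding lq_iff_add by blast
  qed
qed (simp_all add: lq_iff_add zero_add)

lemma lt_iff_succ_lq: "x \<prec> y \<longleftrightarrow> x \<oplus> On \<preceq> y"
  unfolding lt_def lq_iff_add
  by (metis Q_zero_or_succ Q_add_zero Q_succ_neq_zero add_assoc add_commute add_eq_self)

lemma mult_strict_left_mono_nonzero: "x \<prec> y \<Longrightarrow> z \<noteq> Zr \<Longrightarrow> z \<otimes> x \<prec> z \<otimes> y"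
proof -
  assume "x \<prec> y" and z: "z \<noteq> Zr"
  then obtain w where "y = x \<oplus> (On \<oplus> w)"
    unfolding lt_iff_succ_lq lq_iff_add by (metis add_assoc)
  then have "z \<otimes> y = z \<otimes> x \<oplus> (z \<oplus> z \<otimes> w)"
    by (simp add: distrib_left mult_one)
  moreover have "z \<oplus> z \<otimes> w \<noteq> Zr"
    using z add_eq_zero_right add_commute by metis
  ultimately show "z \<otimes> x \<prec> z \<otimes> y"
    unfolding lt_def lq_iff_add using add_eq_self by metis
qed

text \<open>Truncated subtraction; it is introduced only so that the library class
  \<open>linordered_semidom\<close> can be interpreted.\<close>

definition monus :: "'a \<Rightarrow> 'a \<Rightarrow> 'a" (infixl "\<ominus>" 65) where
  "x \<ominus> y = (if y \<preceq> x then THE z. x = y \<oplus> z else Zr)"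

lemma monus_eq: "x \<ominus> y = z" if "x = y \<oplus> z"
proof -
  have "y \<preceq> x"
    using that lq_iff_add by blast
  moreover have "(THE z. x = y \<oplus> z) = z"
  proof (rule the_equality)
    show "x = y \<oplus> z" by (rule that)
    show "z' = z" if "x = y \<oplus> z'" for z'
      using that \<open>x = y \<oplus> z\<close> add_right_cancel[of z' y z] add_commute by metis
  qed
  ultimately show ?thesis
    unfolding monus_def by simp
qed

lemma monus_eq_zero: "\<not> y \<preceq> x \<Longrightarrow> x \<ominus> y = Zr"
  unfolding monus_def by simp

lemma zero_monus: "Zr \<ominus> x = Zr"
  by (metis monus_eq monus_eq_zero Q_add_zero lq_antisym zero_lq)

lemma monus_monus: "x \<ominus> y \<ominus> z = x \<ominus> (y \<oplus> z)"
proof (cases "y \<oplus> z \<preceq> x")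
  case True
  then obtain d where "x = y \<oplus> z \<oplus> d"
    unfolding lq_iff_add by blast
  then show ?thesis
    by (metis monus_eq add_assoc)
next
  case False
  have "x \<ominus> y \<ominus> z = Zr"
  proof (cases "y \<preceq> x")
    case True
    then obtain w where w: "x = y \<oplus> w"
      unfolding lq_iff_add by blast
    with False have "\<not> z \<preceq> w"
      unfolding lq_iff_add by (metis add_assoc)
    then show ?thesis
      using w monus_eq monus_eq_zero by metis
  next
    case False
    then show ?thesis
      by (simp add: monus_eq_zero zero_monus)
  qed
  with False show ?thesis
    by (simp add: monus_eq_zero)
qed

lemma mult_monus: "x \<otimes> (y \<ominus> z) = x \<otimes> y \<ominus> x \<otimes> z"
proof (cases "z \<preceq> y")
  case True
  then obtain d where "y = z \<oplus> d"
    unfolding lq_iff_add by blast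
  then show ?thesis
    by (metis monus_eq distrib_left)
next
  case False
  then have "y \<prec> z"
    unfolding lt_def using lq_total by blast
  then have "x = Zr \<or> \<not> x \<otimes> z \<preceq> x \<otimes> y"
    using mult_strict_left_mono_nonzero lq_antisym unfolding lt_def by blast
  then show ?thesis
    using False by (auto simp: monus_eq_zero zero_mult zero_monus Q_mult_zero)
qed

sublocale arith: linordered_semidom "ad M" "(\<ominus>)" "lq M" "lt M" Zr "mu M" On
proof
  fix x y z
  show "(x \<oplus> y) \<oplus> z = x \<oplus> (y \<oplus> z)" by (rule add_assoc)
  show "x \<oplus> y = y \<oplus> x" by (rule add_commute)
  show "Zr \<oplus> x = x" by (rule zero_add)
  show "(x \<otimes> y) \<otimes> z = x \<otimes> (y \<otimes> z)" by (rule mult_assoc)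
  show "x \<otimes> y = y \<otimes> x" by (rule mult_commute)
  show "On \<otimes> x = x" by (rule one_mult)
  show "x \<otimes> (y \<oplus> z) = x \<otimes> y \<oplus> x \<otimes> z" by (rule distrib_left)
  show "(x \<oplus> y) \<otimes> z = x \<otimes> z \<oplus> y \<otimes> z" by (metis distrib_left mult_commute)
  show "Zr \<otimes> x = Zr" by (rule zero_mult)
  show "x \<otimes> Zr = Zr" by (rule Q_mult_zero)
  show "Zr \<noteq> On" by (rule zero_neq_one)
  show "x \<prec> y \<longleftrightarrow> x \<preceq> y \<and> \<not> y \<preceq> x"
    unfolding lt_def using lq_antisym lq_refl by blast
  show "x \<preceq> x" by (rule lq_refl)
  show "x \<preceq> y \<Longrightarrow> y \<preceq> z \<Longrightarrow> x \<preceq> z" by (rule lq_trans)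
  show "x \<preceq> y \<Longrightarrow> y \<preceq> x \<Longrightarrow> x = y" by (rule lq_antisym)
  show "x \<preceq> y \<or> y \<preceq> x" by (rule lq_total)
  show "x \<preceq> y \<Longrightarrow> z \<oplus> x \<preceq> z \<oplus> y"
    unfolding lq_iff_add by (metis add_assoc)
  show "(x \<oplus> y) \<ominus> x = y" by (rule monus_eq) (rule refl)
  show "x \<ominus> y \<ominus> z = x \<ominus> (y \<oplus> z)" by (rule monus_monus)
  show "x \<otimes> (y \<ominus> z) = x \<otimes> y \<ominus> x \<otimes> z" by (rule mult_monus)
  show "x \<noteq> Zr \<Longrightarrow> y \<noteq> Zr \<Longrightarrow> x \<otimes> y \<noteq> Zr"
    by (metis Q_zero_or_succ Q_mult_succ add_eq_zero_right)
  show "x \<prec> y \<Longrightarrow> Zr \<prec> z \<Longrightarrow> z \<otimes> x \<prec> z \<otimes> y"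
    using mult_strict_left_mono_nonzero unfolding lt_def by metis
  show "Zr \<prec> On"
    unfolding lt_def using zero_lq zero_neq_one by blast
  show "y \<preceq> x \<Longrightarrow> x \<ominus> y \<oplus> y = x"
    unfolding lq_iff_add by (metis monus_eq add_commute)
qed

sublocale arith: canonically_ordered_monoid_add "ad M" Zr "lq M" "lt M"
  by unfold_locales (rule lq_iff_add)

lemma pw_eq_power: "pw M x n = arith.power x n"
  by (induction n) (simp_all add: mult_commute)

lemma num_eq_of_nat: "num M n = arith.of_nat n"
  by (induction n) (simp_all add: add_commute)

lemma nsum_eq_mult: "nsum M n y = arith.of_nat n \<otimes> y"
  by (induction n) (simp_all add: algebra_simps)

lemma dvdB_eq_dvd: "dvdB M = arith.dvd"
  by (simp add: fun_eq_iff dvdB_def arith.dvd_def)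

lemma standard_iff: "standard M y \<longleftrightarrow> (\<exists>n. y = arith.of_nat n)"
  unfolding standard_def num_eq_of_nat ..

section \<open>Least numbers, division and radicals\<close>

lemma least_number_principle:
  assumes "sigma1 F" and "\<And>t. sat M (case_nat t v) F \<longleftrightarrow> (\<forall>u. u \<preceq> t \<longrightarrow> \<not> P u)"
    and "P b"
  shows "\<exists>m. P m \<and> (\<forall>u. P u \<longrightarrow> m \<preceq> u)"
proof (rule ccontr)
  assume no_least: "\<not> ?thesis"
  have "\<forall>u. u \<preceq> t \<longrightarrow> \<not> P u" for t
  proof (rule sigma1_induct[where f = F and v = v and P = "\<lambda>t. \<forall>u. u \<preceq> t \<longrightarrow> \<not> P u"])
    show "\<forall>u. u \<preceq> Zr \<longrightarrow> \<not> P u"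
      using no_least by auto
    fix t
    assume IH: "\<forall>u. u \<preceq> t \<longrightarrow> \<not> P u"
    then have above: "t \<oplus> On \<preceq> u" if "P u" for u
      using that lt_iff_succ_lq arith.not_le by blast
    show "\<forall>u. u \<preceq> t \<oplus> On \<longrightarrow> \<not> P u"
      using no_least above lq_antisym by metis
  qed (use assms in auto)
  then show False
    using assms(3) by blast
qed

lemma div_mod_exists: "d \<noteq> Zr \<Longrightarrow> \<exists>q s. a = q \<otimes> d \<oplus> s \<and> s \<prec> d"
proof (rule sigma1_induct[where f = "Ex (Ex (Conj (Eq (Var 2) (Plus (Times (Var 1) (Var 3)) (Var 0)))
        (Conj (Le (Var 0) (Var 3)) (Neg (Eq (Var 0) (Var 3))))))"
      and v = "\<lambda>_. d" and P = "\<lambda>a. \<exists>q s. a = q \<otimes> d \<oplus> s \<and> s \<prec> d"])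
  assume "d \<noteq> Zr"
  then show "\<exists>q s. Zr = q \<otimes> d \<oplus> s \<and> s \<prec> d"
    by (intro exI[of _ Zr]) (simp add: arith.zero_less_iff_neq_zero)
  fix a
  assume "\<exists>q s. a = q \<otimes> d \<oplus> s \<and> s \<prec> d"
  then obtain q s where a: "a = q \<otimes> d \<oplus> s" and "s \<oplus> On \<preceq> d"
    unfolding lt_iff_succ_lq by blast
  then consider "s \<oplus> On = d" | "s \<oplus> On \<prec> d"
    using arith.le_less by blast
  then show "\<exists>q s. a \<oplus> On = q \<otimes> d \<oplus> s \<and> s \<prec> d"
  proof cases
    case 1
    have "a \<oplus> On = (q \<oplus> On) \<otimes> d \<oplus> Zr"
      by (simp add: a add_assoc 1 arith.distrib_right)
    with \<open>d \<noteq> Zr\<close> show ?thesis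
      by (metis arith.zero_less_iff_neq_zero)
  next
    case 2
    with a show ?thesis
      by (metis add_assoc)
  qed
qed (auto simp: lt_def)

lemma lq_mult_left: "r \<noteq> Zr \<Longrightarrow> k \<preceq> r \<otimes> k"
  unfolding lq_iff_add by (metis Q_zero_or_succ succ_mult add_commute)

lemma mult_left_cancel: "c \<noteq> Zr \<Longrightarrow> c \<otimes> a = c \<otimes> b \<Longrightarrow> a = b"
  by (metis lq_antisym lq_refl arith.mult_left_le_imp_le arith.zero_less_iff_neq_zero)

lemma dvd_iff_bounded: "s \<noteq> Zr \<Longrightarrow> arith.dvd s z \<longleftrightarrow> (\<exists>k. k \<preceq> z \<and> z = s \<otimes> k)"
  unfolding arith.dvd_def using lq_mult_left by blast

lemma dvd_imp_lq: "a \<noteq> Zr \<Longrightarrow> arith.dvd d a \<Longrightarrow> d \<preceq> a"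
  unfolding arith.dvd_def by (metis lq_mult_left mult_commute Q_mult_zero)

text \<open>The cofactor \<open>m\<close> is the least positive \<open>b\<close> with \<open>r\<close> dividing \<open>a b\<close>, i.e.\ \<open>r / gcd r a\<close>.\<close>

lemma minimal_cofactor_exists:
  assumes r: "r \<noteq> Zr"
  obtains m where "m \<noteq> Zr" and "arith.dvd r (a \<otimes> m)"
    and "\<And>b. arith.dvd r (a \<otimes> b) \<Longrightarrow> arith.dvd m b"
proof -
  let ?P = "\<lambda>b. b \<noteq> Zr \<and> (\<exists>k. k \<preceq> a \<otimes> b \<and> a \<otimes> b = r \<otimes> k)"
  have P_iff: "?P b \<longleftrightarrow> b \<noteq> Zr \<and> arith.dvd r (a \<otimes> b)" for b
    using dvd_iff_bounded[OF r] by blast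
  have "\<exists>m. ?P m \<and> (\<forall>u. ?P u \<longrightarrow> m \<preceq> u)"
  proof (rule least_number_principle[where F = "BAll (Var 0) (Neg (Conj (Neg (Eq (Var 0) Zero))
        (BEx (Times (Var 2) (Var 0)) (Eq (Times (Var 3) (Var 1)) (Times (Var 4) (Var 0))))))"
        and v = "\<lambda>i. if i = 0 then a else r" and b = r])
    show "?P r"
      unfolding P_iff using r by simp
  qed auto
  then obtain m where "m \<noteq> Zr" and rm: "arith.dvd r (a \<otimes> m)"
    and least: "\<And>u. u \<noteq> Zr \<Longrightarrow> arith.dvd r (a \<otimes> u) \<Longrightarrow> m \<preceq> u"
    unfolding P_iff by blast
  have "arith.dvd m b" if rb: "arith.dvd r (a \<otimes> b)" for b
  proof -
    obtain q s where b: "b = q \<otimes> m \<oplus> s" and "s \<prec> m"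
      using div_mod_exists[OF \<open>m \<noteq> Zr\<close>] by blast
    have "a \<otimes> b = (a \<otimes> m) \<otimes> q \<oplus> a \<otimes> s"
      unfolding b by (simp add: algebra_simps)
    moreover have "arith.dvd r ((a \<otimes> m) \<otimes> q)"
      using rm by simp
    ultimately have "arith.dvd r (a \<otimes> s)"
      using rb arith.dvd_add_right_iff by metis
    then have "s = Zr"
      using least \<open>s \<prec> m\<close> arith.not_le by blast
    then show ?thesis
      using b by simp
  qed
  with \<open>m \<noteq> Zr\<close> rm show thesis
    by (rule that)
qed

lemma gcd_cofactor_decomposition:
  assumes r: "r \<noteq> Zr"
  obtains m t where "r = m \<otimes> t" and "m \<noteq> Zr" and "arith.dvd t a"
    and "\<And>b. arith.dvd r (a \<otimes> b) \<Longrightarrow> arith.dvd m b"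
    and "\<And>c. arith.dvd c r \<Longrightarrow> arith.dvd c a \<Longrightarrow> arith.dvd c t"
proof -
  obtain m where "m \<noteq> Zr" and rm: "arith.dvd r (a \<otimes> m)"
    and cofactor: "\<And>b. arith.dvd r (a \<otimes> b) \<Longrightarrow> arith.dvd m b"
    using minimal_cofactor_exists[OF r] by blast
  have "arith.dvd m r"
    by (rule cofactor) simp
  then obtain t where t: "r = m \<otimes> t"
    by blast
  show thesis
  proof
    show "r = m \<otimes> t" by (rule t)
    show "m \<noteq> Zr" by (rule \<open>m \<noteq> Zr\<close>)
    show "arith.dvd m b" if "arith.dvd r (a \<otimes> b)" for b
      using that by (rule cofactor)
    obtain k where k: "a \<otimes> m = r \<otimes> k"
      using rm by blast
    have "m \<otimes> a = r \<otimes> k"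
      using k by (metis mult_commute)
    also have "\<dots> = m \<otimes> (t \<otimes> k)"
      unfolding t by (rule mult_assoc)
    finally have "a = t \<otimes> k"
      by (rule mult_left_cancel[OF \<open>m \<noteq> Zr\<close>])
    then show "arith.dvd t a" ..
    show "arith.dvd c t" if cr: "arith.dvd c r" and ca: "arith.dvd c a" for c
    proof -
      obtain r' a' where r': "r = c \<otimes> r'" and a': "a = c \<otimes> a'"
        using cr ca by blast
      have "a \<otimes> r' = r \<otimes> a'"
        unfolding r' a' by (simp add: ac_simps)
      then have "arith.dvd r (a \<otimes> r')"
        by (rule arith.dvdI)
      then obtain j where j: "r' = m \<otimes> j"
        using cofactor by blast
      have "m \<otimes> t = c \<otimes> (m \<otimes> j)"
        using r' t j by metis
      also have "\<dots> = m \<otimes> (c \<otimes> j)"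
        by (rule arith.mult.left_commute)
      finally have "t = c \<otimes> j"
        by (rule mult_left_cancel[OF \<open>m \<noteq> Zr\<close>])
      then show ?thesis ..
    qed
  qed
qed

lemma sqfree_nonzero: "sqfreeB M r \<Longrightarrow> r \<noteq> Zr"
  unfolding sqfreeB_def dvdB_eq_dvd using zero_neq_one by (metis arith.dvd_0_right)

lemma sqfree_dvd: "sqfreeB M r \<Longrightarrow> arith.dvd m r \<Longrightarrow> sqfreeB M m"
  unfolding sqfreeB_def dvdB_eq_dvd using arith.dvd_trans by blast

lemma sqfree_one: "sqfreeB M On"
  unfolding sqfreeB_def dvdB_eq_dvd
proof (intro allI impI)
  fix d
  assume "arith.dvd (d \<otimes> d) On"
  then have "arith.dvd d On"
    using arith.dvd_mult_left by blast
  then have "d \<noteq> Zr" and "d \<preceq> On"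
    using zero_neq_one dvd_imp_lq by auto
  then show "d = On"
    using lq_antisym lt_iff_succ_lq zero_add arith.zero_less_iff_neq_zero by metis
qed

lemma sqfree_dvd_power:
  "sqfreeB M r \<Longrightarrow> arith.dvd r (arith.power a (Suc k)) \<Longrightarrow> arith.dvd r a"
proof (induction k arbitrary: r)
  case 0
  then show ?case by simp
next
  case (Suc k)
  obtain m t where r: "r = m \<otimes> t" and "m \<noteq> Zr" and "arith.dvd t a"
    and cofactor: "\<And>b. arith.dvd r (a \<otimes> b) \<Longrightarrow> arith.dvd m b"
    and gcd: "\<And>c. arith.dvd c r \<Longrightarrow> arith.dvd c a \<Longrightarrow> arith.dvd c t"
    using gcd_cofactor_decomposition[OF sqfree_nonzero[OF Suc.prems(1)], where a = a] by blast
  have "arith.dvd m r"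
    using r by simp
  with Suc.prems(1) have "sqfreeB M m"
    by (rule sqfree_dvd)
  moreover have "arith.dvd m (arith.power a (Suc k))"
    using Suc.prems(2) by (intro cofactor) simp
  ultimately have "arith.dvd m a"
    by (rule Suc.IH)
  then have "arith.dvd (m \<otimes> m) r"
    using gcd \<open>arith.dvd m r\<close> r by (simp add: arith.mult_dvd_mono)
  then have "m = On"
    using Suc.prems(1) unfolding sqfreeB_def dvdB_eq_dvd by blast
  then show ?case
    using r \<open>arith.dvd t a\<close> by simp
qed

lemma sqfree_iff_bounded:
  assumes "s \<noteq> Zr"
  shows "sqfreeB M s \<longleftrightarrow> (\<forall>d. d \<preceq> s \<longrightarrow> (\<forall>k. k \<preceq> s \<longrightarrow> d \<otimes> d \<otimes> k = s \<longrightarrow> d = On))"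
proof
  assume bounded: "\<forall>d. d \<preceq> s \<longrightarrow> (\<forall>k. k \<preceq> s \<longrightarrow> d \<otimes> d \<otimes> k = s \<longrightarrow> d = On)"
  show "sqfreeB M s"
    unfolding sqfreeB_def dvdB_eq_dvd
  proof (intro allI impI)
    fix d
    assume "arith.dvd (d \<otimes> d) s"
    then obtain k where k: "s = d \<otimes> d \<otimes> k"
      by blast
    with assms have "d \<otimes> k \<noteq> Zr" and "d \<otimes> d \<noteq> Zr"
      by auto
    have "d \<preceq> s"
      using lq_mult_left[OF \<open>d \<otimes> k \<noteq> Zr\<close>, of d] k by (simp add: ac_simps)
    moreover have "k \<preceq> s"
      using lq_mult_left[OF \<open>d \<otimes> d \<noteq> Zr\<close>, of k] k by simp
    ultimately show "d = On"
      using bounded k by blast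
  qed
next
  assume "sqfreeB M s"
  then show "\<forall>d. d \<preceq> s \<longrightarrow> (\<forall>k. k \<preceq> s \<longrightarrow> d \<otimes> d \<otimes> k = s \<longrightarrow> d = On)"
    unfolding sqfreeB_def dvdB_eq_dvd by (metis arith.dvd_triv_left)
qed

lemma sqfree_divisor_iff_bounded:
  assumes "z \<noteq> Zr"
  shows "arith.dvd s z \<and> sqfreeB M s \<longleftrightarrow> (\<exists>k. k \<preceq> z \<and> z = s \<otimes> k)
    \<and> (\<forall>d. d \<preceq> s \<longrightarrow> (\<forall>k. k \<preceq> s \<longrightarrow> d \<otimes> d \<otimes> k = s \<longrightarrow> d = On))"
proof (cases "s = Zr")
  case True
  with assms show ?thesis
    by (auto dest: sqfree_nonzero)
next
  case False
  show ?thesis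
    unfolding dvd_iff_bounded[OF False] sqfree_iff_bounded[OF False] ..
qed

text \<open>The radical is \<open>z - u\<close> for the least \<open>u\<close> such that \<open>z - u\<close> is a squarefree divisor of \<open>z\<close>.\<close>

lemma rad_exists:
  assumes z: "z \<noteq> Zr"
  obtains r where "is_rad M z r"
proof -
  let ?P = "\<lambda>u. \<exists>s. s \<preceq> z \<and> s \<oplus> u = z \<and> (\<exists>k. k \<preceq> z \<and> z = s \<otimes> k)
     \<and> (\<forall>d. d \<preceq> s \<longrightarrow> (\<forall>k. k \<preceq> s \<longrightarrow> d \<otimes> d \<otimes> k = s \<longrightarrow> d = On))"
  have P_iff: "?P u \<longleftrightarrow> (\<exists>s. s \<oplus> u = z \<and> arith.dvd s z \<and> sqfreeB M s)" for u
    unfolding sqfree_divisor_iff_bounded[OF z] using lq_iff_add by blast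
  obtain w where "On \<oplus> w = z"
    using z lt_iff_succ_lq lq_iff_add zero_add arith.zero_less_iff_neq_zero by metis
  have "\<exists>u. ?P u \<and> (\<forall>u'. ?P u' \<longrightarrow> u \<preceq> u')"
  proof (rule least_number_principle[where F = "BAll (Var 0) (Neg (BEx (Var 2) (Conj (Eq (Plus (Var 0) (Var 1)) (Var 3))
        (Conj (BEx (Var 3) (Eq (Var 4) (Times (Var 1) (Var 0))))
        (BAll (Var 0) (BAll (Var 1) (Disj (Neg (Eq (Times (Times (Var 1) (Var 1)) (Var 0)) (Var 2))) (Eq (Var 1) One))))))))"
        and v = "\<lambda>_. z" and b = w])
    show "?P w"
      unfolding P_iff using \<open>On \<oplus> w = z\<close> sqfree_one by auto
  qed auto
  then obtain u s0 where s0: "s0 \<oplus> u = z" "arith.dvd s0 z" "sqfreeB M s0"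
    and least: "\<And>u'. ?P u' \<Longrightarrow> u \<preceq> u'"
    unfolding P_iff by blast
  have "s \<preceq> s0" if s: "arith.dvd s z" "sqfreeB M s" for s
  proof (rule ccontr)
    assume "\<not> s \<preceq> s0"
    then have "s0 \<prec> s"
      by (simp add: arith.not_le)
    obtain u' where u': "s \<oplus> u' = z"
      using dvd_imp_lq[OF z s(1)] lq_iff_add by metis
    then have "u \<preceq> u'"
      using least s unfolding P_iff by blast
    with \<open>s0 \<prec> s\<close> have "s0 \<oplus> u \<prec> s \<oplus> u'"
      by (rule arith.add_less_le_mono)
    then show False
      using s0(1) u' by simp
  qed
  then have "is_rad M z s0"
    unfolding is_rad_def dvdB_eq_dvd using s0 by blast
  then show thesis ..
qed

lemma less_of_nat_imp: "u \<prec> arith.of_nat k \<Longrightarrow> \<exists>i<k. u = arith.of_nat i"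
proof (induction k arbitrary: u)
  case 0
  then show ?case by simp
next
  case (Suc k)
  then have "u \<preceq> arith.of_nat k"
    unfolding lt_iff_succ_lq arith.of_nat_Suc by (metis add_commute arith.add_le_cancel_right)
  then show ?case
    using Suc.IH arith.le_less less_Suc_eq by metis
qed

lemma nonstandard_ge_of_nat: "\<not> standard M q \<Longrightarrow> arith.of_nat N \<preceq> q"
  using less_of_nat_imp arith.not_le unfolding standard_iff by blast

lemma of_nat_less_power: "On \<prec> x \<Longrightarrow> arith.of_nat K \<prec> arith.power x K"
proof (induction K)
  case 0
  then show ?case by simp
next
  case (Suc K)
  have "On \<oplus> On \<preceq> x"
    using Suc.prems lt_iff_succ_lq by blast
  then have "(On \<oplus> On) \<otimes> arith.power x K \<preceq> x \<otimes> arith.power x K"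
    by (rule arith.mult_right_mono) simp
  then have "arith.power x K \<oplus> arith.power x K \<preceq> arith.power x (Suc K)"
    by (simp only: arith.distrib_right arith.mult_1_left arith.power_Suc)
  have "On \<preceq> arith.power x K"
    using Suc.prems arith.one_le_power arith.less_imp_le by blast
  with Suc have "arith.of_nat K \<oplus> On \<prec> arith.power x K \<oplus> arith.power x K"
    by (intro arith.add_less_le_mono) simp_all
  with \<open>arith.power x K \<oplus> arith.power x K \<preceq> arith.power x (Suc K)\<close> show ?case
    by (simp add: add_commute arith.less_le_trans)
qed

lemma rad_lq_base:
  assumes "is_rad M z r" and "arith.dvd z (arith.power w (Suc k))" and "w \<noteq> Zr"
  shows "r \<preceq> w"
proof -
  from assms(1) have "arith.dvd r z" and "sqfreeB M r"
    unfolding is_rad_def dvdB_eq_dvd by blast+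
  from \<open>arith.dvd r z\<close> assms(2) have "arith.dvd r (arith.power w (Suc k))"
    by (rule arith.dvd_trans)
  with \<open>sqfreeB M r\<close> have "arith.dvd r w"
    by (rule sqfree_dvd_power)
  with \<open>w \<noteq> Zr\<close> show ?thesis
    by (rule dvd_imp_lq)
qed

lemma rad_square_lq_power:
  assumes "On \<prec> x" and "2 \<le> n" and "is_rad M (arith.power x n) r"
  shows "r \<otimes> r \<preceq> arith.power x n"
proof -
  obtain k where n: "n = Suc k"
    using assms(2) by (cases n) auto
  have "x \<noteq> Zr"
    using assms(1) by auto
  with assms(3) have "r \<preceq> x"
    unfolding n by (rule rad_lq_base[OF _ arith.dvd_refl])
  then have "r \<otimes> r \<preceq> arith.power x 2"
    unfolding arith.power2_eq_square by (intro arith.mult_mono) simp_all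
  also have "\<dots> \<preceq> arith.power x n"
    using assms(1,2) arith.power_increasing arith.less_imp_le by blast
  finally show ?thesis .
qed

lemma rad_power_bound:
  assumes rad: "is_rad M z r" and z: "z = arith.power X (Suc n) \<otimes> arith.power x i"
    and "i \<le> Suc n" and "x \<noteq> Zr" and small: "arith.of_nat K \<otimes> arith.power x n \<prec> X"
  shows "arith.of_nat K \<otimes> arith.power r n \<prec> z"
proof -
  have "X \<noteq> Zr"
    using small by auto
  have "arith.dvd z (arith.power (X \<otimes> x) (Suc n))"
    unfolding z arith.power_mult_distrib
    using \<open>i \<le> Suc n\<close> by (intro arith.mult_dvd_mono arith.le_imp_power_dvd) simp_all
  then have "r \<preceq> X \<otimes> x"
    using rad by (intro rad_lq_base) (simp_all add: \<open>X \<noteq> Zr\<close> \<open>x \<noteq> Zr\<close>)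
  then have "arith.of_nat K \<otimes> arith.power r n \<preceq> arith.of_nat K \<otimes> arith.power (X \<otimes> x) n"
    by (intro arith.mult_left_mono arith.power_mono) simp_all
  also have "\<dots> = (arith.of_nat K \<otimes> arith.power x n) \<otimes> arith.power X n"
    by (simp add: arith.power_mult_distrib ac_simps)
  also have "\<dots> \<prec> X \<otimes> arith.power X n"
    using small \<open>X \<noteq> Zr\<close> by (intro arith.mult_strict_right_mono) (simp_all add: arith.zero_less_iff_neq_zero)
  also have "\<dots> \<preceq> z"
    unfolding z using lq_mult_left[of "arith.power x i" "X \<otimes> arith.power X n"] \<open>x \<noteq> Zr\<close>
    by (simp add: mult_commute)
  finally show ?thesis .
qed

end

section \<open>Models of Exp'\<close>

locale exponential_model = isigma1_model +
  fixes A :: "'a set" and e :: "'a \<Rightarrow> 'a \<Rightarrow> 'a"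
  assumes ExpP: "ExpP M A e"
begin

lemma Pr_on: "Pr_on M A"
  using ExpP unfolding ExpP_def by blast

lemma zero_in_A: "Zr \<in> A" and one_in_A: "On \<in> A"
  and add_in_A: "a \<in> A \<Longrightarrow> b \<in> A \<Longrightarrow> a \<oplus> b \<in> A"
  and mult_in_A: "a \<in> A \<Longrightarrow> b \<in> A \<Longrightarrow> a \<otimes> b \<in> A"
  using ExpP unfolding ExpP_def substr_def by blast+

lemma e_zero: "e x Zr = On"
  and e_nonzero: "y \<in> A \<Longrightarrow> x \<noteq> Zr \<Longrightarrow> e x y \<noteq> Zr"
  and e_one: "e x On = x"
  and e_add: "y \<in> A \<Longrightarrow> z \<in> A \<Longrightarrow> e x (y \<oplus> z) = e x y \<otimes> e x z"
  using ExpP zero_in_A unfolding ExpP_def by blast+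

lemma of_nat_in_A: "arith.of_nat n \<in> A"
  by (induction n) (simp_all add: zero_in_A one_in_A add_in_A)

lemma e_of_nat_mult: "q \<in> A \<Longrightarrow> e x (arith.of_nat n \<otimes> q) = arith.power (e x q) n"
  by (induction n) (simp_all add: e_zero e_add mult_in_A of_nat_in_A arith.distrib_right)

lemma e_of_nat: "e x (arith.of_nat n) = arith.power x n"
  using e_of_nat_mult[OF one_in_A, of x n] by (simp add: e_one)

lemma Presburger_division:
  assumes "0 < k" and "y \<in> A"
  obtains q i where "q \<in> A" and "i < k" and "y = arith.of_nat k \<otimes> q \<oplus> arith.of_nat i"
proof -
  obtain q where "q \<in> A" and lo: "arith.of_nat k \<otimes> q \<preceq> y"
    and hi: "y \<prec> arith.of_nat k \<otimes> (q \<oplus> On)"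
    using Pr_on assms unfolding Pr_on_def nsum_eq_mult by blast
  then obtain j where j: "arith.of_nat k \<otimes> q \<oplus> j = y"
    using lq_iff_add by metis
  have "arith.of_nat k \<otimes> q \<oplus> j \<prec> arith.of_nat k \<otimes> q \<oplus> arith.of_nat k"
    using hi unfolding j arith.distrib_left by simp
  then have "j \<prec> arith.of_nat k"
    by simp
  then obtain i where "i < k" and "j = arith.of_nat i"
    using less_of_nat_imp by blast
  with \<open>q \<in> A\<close> j show thesis
    using that by blast
qed

lemma nonstandard_exponent_split:
  assumes "y \<in> A" and "\<not> standard M y" and "x \<noteq> Zr" and "0 < k"
  obtains X i where "i < k" and "e x y = arith.power X k \<otimes> arith.power x i"
    and "arith.power x N \<preceq> X"
proof -
  obtain q i where "q \<in> A" and "i < k" and y: "y = arith.of_nat k \<otimes> q \<oplus> arith.of_nat i"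
    using Presburger_division assms(1,4) by blast
  have "\<not> standard M q"
  proof
    assume "standard M q"
    then obtain p where "q = arith.of_nat p"
      unfolding standard_iff by blast
    then have "y = arith.of_nat (k * p + i)"
      using y by simp
    with assms(2) show False
      unfolding standard_iff by blast
  qed
  then have "arith.of_nat N \<preceq> q"
    by (rule nonstandard_ge_of_nat)
  then obtain z where "z \<in> A" and q: "q = arith.of_nat N \<oplus> z"
    using Pr_on of_nat_in_A \<open>q \<in> A\<close> unfolding Pr_on_def by metis
  have "e x q = arith.power x N \<otimes> e x z"
    unfolding q using \<open>z \<in> A\<close> by (simp add: e_add of_nat_in_A e_of_nat)
  then have "arith.power x N \<preceq> e x q"
    using lq_mult_left[of "e x z"] e_nonzero[OF \<open>z \<in> A\<close> assms(3)] by (metis mult_commute)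
  moreover have "e x y = arith.power (e x q) k \<otimes> arith.power x i"
    unfolding y using \<open>q \<in> A\<close> by (simp add: e_add mult_in_A of_nat_in_A e_of_nat_mult e_of_nat)
  ultimately show thesis
    using that \<open>i < k\<close> by blast
qed

lemma standard_exponent_rad_bound:
  assumes "On \<prec> x" and "On \<prec> y" and "standard M y"
  obtains r where "is_rad M (e x y) r" and "r \<otimes> r \<preceq> e x y"
proof -
  obtain n where y: "y = arith.of_nat n"
    using assms(3) unfolding standard_iff by blast
  with assms(2) have "n \<noteq> 0" and "n \<noteq> 1"
    by (auto simp: lt_def)
  then have "2 \<le> n"
    by linarith
  have "arith.power x n \<noteq> Zr"
    using assms(1) by auto
  then obtain r where "is_rad M (arith.power x n) r"
    by (rule rad_exists)
  with assms(1) \<open>2 \<le> n\<close> show thesis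
    using that rad_square_lq_power unfolding y e_of_nat by blast
qed

lemma nonstandard_exponent_rad_bound:
  assumes "y \<in> A" and "On \<prec> x" and "\<not> standard M y"
  obtains r where "is_rad M (e x y) r" and "arith.of_nat K \<otimes> arith.power r n \<prec> e x y"
proof -
  have "x \<noteq> Zr"
    using assms(2) by auto
  obtain X i where "i < Suc n" and exy: "e x y = arith.power X (Suc n) \<otimes> arith.power x i"
    and X: "arith.power x (K + n) \<preceq> X"
    by (rule nonstandard_exponent_split[OF assms(1,3) \<open>x \<noteq> Zr\<close>, where k = "Suc n" and N = "K + n"]) simp
  have "arith.of_nat K \<otimes> arith.power x n \<prec> arith.power x K \<otimes> arith.power x n"
    using assms(2) \<open>x \<noteq> Zr\<close>
    by (intro arith.mult_strict_right_mono of_nat_less_power) (simp_all add: arith.zero_less_iff_neq_zero)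
  also have "\<dots> \<preceq> X"
    using X by (simp add: arith.power_add)
  finally have "arith.of_nat K \<otimes> arith.power x n \<prec> X" .
  from e_nonzero[OF assms(1) \<open>x \<noteq> Zr\<close>] obtain r where "is_rad M (e x y) r"
    by (rule rad_exists)
  moreover have "arith.of_nat K \<otimes> arith.power r n \<prec> e x y"
    using rad_power_bound[OF calculation exy] \<open>i < Suc n\<close> \<open>x \<noteq> Zr\<close>
      \<open>arith.of_nat K \<otimes> arith.power x n \<prec> X\<close> by simp
  ultimately show thesis
    by (rule that)
qed

end

theorem lemma5p3:
  fixes B :: "'a Lstr" and A :: "'a set" and e :: "'a \<Rightarrow> 'a \<Rightarrow> 'a"
    and K0 :: nat and x y :: 'a
  assumes "ISigma1 B" and "abcB B K0" and "catalanB B"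
    and "ExpP B A e"
    and "y \<in> A" and "lt B (on B) x" and "lt B (on B) y"
  shows "(standard B y \<longrightarrow>
            (\<exists>r. is_rad B (e x y) r \<and> lq B (mu B r r) (e x y)))
       \<and> (\<not> standard B y \<longrightarrow>
            (\<forall>K n::nat. \<exists>r. is_rad B (e x y) r \<and>
                lt B (mu B (num B K) (pw B r n)) (e x y)))"
proof -
  interpret exponential_model B A e
    using assms(1,4) by (simp add: exponential_model_def exponential_model_axioms_def isigma1_model_def)
  show ?thesis
    unfolding pw_eq_power num_eq_of_nat
  proof (intro conjI impI allI)
    assume "standard B y"
    with assms(6,7) obtain r where "is_rad B (e x y) r" and "lq B (mu B r r) (e x y)"
      by (rule standard_exponent_rad_bound)
    then show "\<exists>r. is_rad B (e x y) r \<and> lq B (mu B r r) (e x y)"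
      by blast
  next
    fix K n :: nat
    assume "\<not> standard B y"
    with assms(5,6) obtain r where "is_rad B (e x y) r"
      and "lt B (mu B (arith.of_nat K) (arith.power r n)) (e x y)"
      by (rule nonstandard_exponent_rad_bound)
    then show "\<exists>r. is_rad B (e x y) r \<and> lt B (mu B (arith.of_nat K) (arith.power r n)) (e x y)"
      by blast
  qed
qed

end
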